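(* For integers $m,k\ge 1$ and complex $\alpha$ with $\operatorname{Re}(\alpha)>0$, the integrals $I(\alpha,m,k)$ satisfy the recurrence $$I(\alpha,m,k)=\sum_{i=0}^{m-1}\binom{m-1}{i}(m-i-1)!\,\frac{(-1)^{m-i}}{\alpha^{m-i}}\,I(\alpha,i,k) +\sum_{i=0}^{m-1}\sum_{j=0}^{k-1}\binom{m-1}{i}\binom{k}{j}(-1)^{m+k-i-j}(m+k-i-j-1)!\,\Big(H_\alpha^{(m+k-i-j)}-\zeta(m+k-i-j)\Big)\,I(\alpha,i,j),$$ where $I(\alpha,0,0)=\frac1\alpha$ and $I(\alpha,i,0)=(-1)^i\,i!\,\alpha^{-i-1}$ for $i\ge 0$.
   Context: For integers $m,k\ge0$ and $\operatorname{Re}(\alpha)>0$, $I(\alpha,m,k):=\int_0^1 x^{\alpha-1}\ln^m x\,\ln^k(1-x)\,dx$. Shifted harmonic numbers: for a complex number $\alpha$ that is not a negative integer and an integer $s\ge 2$, $H_\alpha^{(s)} := \sum_{n=1}^\infty\left(\frac1{n^s}-\frac1{(n+\alpha)^s}\right)=\zeta(s)-\zeta(s,\alpha+1)$, where $\zeta$ is the Riemann zeta function and $\zeta(s,\alpha+1)=\sum_{n=1}^\infty (n+\alpha)^{-s}$ is the Hurwitz zeta function. *)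

theory Defs
  imports "HOL-Analysis.Analysis"
begin

definition Iint :: "complex \<Rightarrow> nat \<Rightarrow> nat \<Rightarrow> complex" where
  "Iint \<alpha> m k = integral {0..1}
     (\<lambda>x::real. complex_of_real x powr (\<alpha> - 1) * complex_of_real ((ln x) ^ m * (ln (1 - x)) ^ k))"

definition zeta_int :: "nat \<Rightarrow> complex" where
  "zeta_int s = (\<Sum>n. 1 / (of_nat (Suc n)) ^ s)"

definition shifted_harmonic :: "complex \<Rightarrow> nat \<Rightarrow> complex" where
  "shifted_harmonic \<alpha> s = (\<Sum>n. 1 / (of_nat (Suc n)) ^ s - 1 / (of_nat (Suc n) + \<alpha>) ^ s)"

end

theory Submission
  imports Defs "HOL-Complex_Analysis.Conformal_Mappings"
begin

text \<open>
  Put \<open>B(a,b,m,k)\<close> = integral over \<open>(0,1)\<close> of \<open>x^(a-1) (1-x)^(b-1) ln^m x ln^k (1-x)\<close>, so that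
  \<open>I(\<alpha>,m,k) = B(\<alpha>,1,m,k)\<close>. Since \<open>\<bar>ln x\<bar> \<le> x^(-\<delta>)/\<delta>\<close>, differentiation under the integral sign
  is legitimate, and \<open>B(a,b,m,k) = \<partial>_a^m \<partial>_b^k B(a,b,0,0)\<close>, where \<open>B(a,b,0,0)\<close> is the Beta
  function (on the positive reals by the Beta integral, on the right half-plane by analytic
  continuation). Hence \<open>B(a,b,1,0) = B(a,b,0,0) (\<psi>(a) - \<psi>(a+b))\<close>, and Leibniz's rule, applied
  \<open>k\<close> times in \<open>b\<close> and then \<open>m-1\<close> times in \<open>a\<close>, expresses \<open>B(a,b,m,k)\<close> through the \<open>B(a,b,i,j)\<close>
  with \<open>i < m\<close>, \<open>j \<le> k\<close> and the derivatives \<open>\<partial>_a^p \<partial>_b^q (\<psi>(a) - \<psi>(a+b))\<close>. At \<open>b = 1\<close> these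
  are \<open>\<psi>^(p)(\<alpha>) - \<psi>^(p)(\<alpha>+1) = (-1)^(p+1) p! / \<alpha>^(p+1)\<close> for \<open>q = 0\<close>, and otherwise
  \<open>-\<psi>^(p+q)(\<alpha>+1)\<close>, a multiple of \<open>H_\<alpha>^(s) - \<zeta>(s)\<close> with \<open>s = p+q+1\<close>.
\<close>

section \<open>The logarithmic Beta integrals\<close>

lemma abs_ln_power_le_powr:
  fixes x d :: real
  assumes "0 < x" "x \<le> 1" "0 < d"
  shows "\<bar>ln x\<bar> ^ p \<le> (1 / d) ^ p * x powr (- (d * p))"
proof -
  have "\<bar>ln x\<bar> = ln (1 / x)"
    using assms by (simp add: ln_div)
  also have "\<dots> \<le> (1 / x) powr d / d"
    using assms by (intro ln_powr_bound) auto
  also have "\<dots> = x powr (- d) / d"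
    using assms by (simp add: powr_minus_divide powr_divide)
  finally have "\<bar>ln x\<bar> ^ p \<le> (x powr (- d) / d) ^ p"
    by (intro power_mono) auto
  also have "\<dots> = (1 / d) ^ p * x powr (- (d * p))"
    using assms by (simp add: power_divide powr_power mult_ac)
  finally show ?thesis .
qed

definition abs_log_Beta_integrand :: "real \<Rightarrow> real \<Rightarrow> nat \<Rightarrow> nat \<Rightarrow> real \<Rightarrow> real" where
  "abs_log_Beta_integrand s t p q x =
     x powr (s - 1) * (1 - x) powr (t - 1) * \<bar>ln x\<bar> ^ p * \<bar>ln (1 - x)\<bar> ^ q"

lemma Beta_integrand_integrable:
  fixes s t :: real
  assumes "0 < s" "0 < t"
  shows "(\<lambda>x. x powr (s - 1) * (1 - x) powr (t - 1)) integrable_on {0<..<1}"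
  using has_integral_Beta_real[OF assms] integrable_on_Icc_iff_Ioo has_integral_integrable
  by blast

text \<open>
  Each logarithm costs an arbitrarily small power of \<open>x\<close> resp. \<open>1 - x\<close>, so the
  integrand is dominated by a Beta integrand with slightly smaller exponents.
\<close>
lemma abs_log_Beta_integrand_integrable:
  fixes s t :: real
  assumes "0 < s" "0 < t"
  shows "abs_log_Beta_integrand s t p q integrable_on {0<..<1}"
proof -
  define d where "d = s / (2 * (p + 1))"
  define e where "e = t / (2 * (q + 1))"
  define s' where "s' = s - d * p"
  define t' where "t' = t - e * q"
  define C where "C = (1 / d) ^ p * (1 / e) ^ q"
  have de: "d > 0" "e > 0"
    using assms by (auto simp: d_def e_def)
  have "d * p \<le> s / 2" "e * q \<le> t / 2"
    using assms by (simp_all add: d_def e_def field_simps)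
  then have s't': "s' > 0" "t' > 0"
    using assms by (simp_all add: s'_def t'_def)
  show ?thesis
  proof (rule measurable_bounded_by_integrable_imp_integrable)
    show "abs_log_Beta_integrand s t p q \<in> borel_measurable (lebesgue_on {0<..<1})"
      unfolding abs_log_Beta_integrand_def
      by (intro continuous_imp_measurable_on_sets_lebesgue continuous_intros) auto
    show "(\<lambda>x. C * (x powr (s' - 1) * (1 - x) powr (t' - 1))) integrable_on {0<..<1}"
      using Beta_integrand_integrable[OF s't'] by (rule integrable_on_mult_right)
    fix x :: real
    assume x: "x \<in> {0<..<1}"
    have "norm (abs_log_Beta_integrand s t p q x)
        = x powr (s - 1) * (1 - x) powr (t - 1) * (\<bar>ln x\<bar> ^ p * \<bar>ln (1 - x)\<bar> ^ q)"
      by (simp add: abs_log_Beta_integrand_def mult_ac)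
    also have "\<dots> \<le> x powr (s - 1) * (1 - x) powr (t - 1)
                   * (((1 / d) ^ p * x powr (- (d * p))) * ((1 / e) ^ q * (1 - x) powr (- (e * q))))"
      using x de by (intro mult_left_mono mult_mono abs_ln_power_le_powr) auto
    also have "\<dots> = C * (x powr (s' - 1) * (1 - x) powr (t' - 1))"
      by (simp add: C_def s'_def t'_def powr_add[symmetric] algebra_simps)
    finally show "norm (abs_log_Beta_integrand s t p q x) \<le> C * (x powr (s' - 1) * (1 - x) powr (t' - 1))" .
  qed auto
qed

text \<open>Complex powers are written via \<open>exp\<close>, so that they are visibly entire in \<open>a\<close> and \<open>b\<close>.\<close>
definition log_Beta_integrand :: "complex \<Rightarrow> complex \<Rightarrow> nat \<Rightarrow> nat \<Rightarrow> real \<Rightarrow> complex" where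
  "log_Beta_integrand a b m k x =
     exp ((a - 1) * of_real (ln x)) * exp ((b - 1) * of_real (ln (1 - x)))
     * of_real (ln x ^ m * ln (1 - x) ^ k)"

definition log_Beta_integral :: "complex \<Rightarrow> complex \<Rightarrow> nat \<Rightarrow> nat \<Rightarrow> complex" where
  "log_Beta_integral a b m k = integral {0<..<1} (log_Beta_integrand a b m k)"

lemma norm_log_Beta_integrand:
  "x \<in> {0<..<1} \<Longrightarrow> norm (log_Beta_integrand a b m k x) = abs_log_Beta_integrand (Re a) (Re b) m k x"
  by (simp add: log_Beta_integrand_def abs_log_Beta_integrand_def norm_mult norm_power powr_def mult_ac)

lemma log_Beta_integrand_integrable:
  assumes "0 < Re a" "0 < Re b"
  shows "log_Beta_integrand a b m k integrable_on {0<..<1}"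
proof (rule measurable_bounded_by_integrable_imp_integrable)
  show "log_Beta_integrand a b m k \<in> borel_measurable (lebesgue_on {0<..<1})"
    unfolding log_Beta_integrand_def
    by (intro continuous_imp_measurable_on_sets_lebesgue continuous_intros) auto
  show "abs_log_Beta_integrand (Re a) (Re b) m k integrable_on {0<..<1}"
    using assms by (rule abs_log_Beta_integrand_integrable)
qed (auto simp: norm_log_Beta_integrand)

lemma log_Beta_integral_has_integral:
  assumes "0 < Re a" "0 < Re b"
  shows "(log_Beta_integrand a b m k has_integral log_Beta_integral a b m k) {0<..<1}"
  unfolding log_Beta_integral_def
  using log_Beta_integrand_integrable[OF assms] by (rule integrable_integral)

lemma Iint_eq_log_Beta_integral: "Iint \<alpha> m k = log_Beta_integral \<alpha> 1 m k"
proof -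
  have "Iint \<alpha> m k = integral {0<..<1}
          (\<lambda>x. complex_of_real x powr (\<alpha> - 1) * complex_of_real (ln x ^ m * ln (1 - x) ^ k))"
    by (simp add: Iint_def integral_open_interval_real)
  also have "\<dots> = log_Beta_integral \<alpha> 1 m k"
    unfolding log_Beta_integral_def
    by (intro integral_cong) (auto simp: log_Beta_integrand_def powr_def Ln_of_real mult_ac)
  finally show ?thesis .
qed

lemma log_Beta_integrand_reflect:
  "log_Beta_integrand a b m k (1 - x) = log_Beta_integrand b a k m x"
  by (simp add: log_Beta_integrand_def mult_ac)

lemma integral_reflect_unit_interval:
  fixes g :: "real \<Rightarrow> 'a::euclidean_space"
  shows "integral {0..1} (\<lambda>x. g (1 - x)) = integral {0..1} g"
proof -
  have "integral {0..1} ((\<lambda>x. g (- x)) \<circ> (+) (- 1)) = integral {0 + - 1..1 + - 1} (\<lambda>x. g (- x))"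
    by (rule integral_shift_Icc_real)
  also have "\<dots> = integral {0..1} g"
    using Henstock_Kurzweil_Integration.integral_reflect_real[of 1 0 g] by simp
  finally show ?thesis
    by (simp add: o_def)
qed

lemma log_Beta_integral_commute: "log_Beta_integral a b m k = log_Beta_integral b a k m"
proof -
  have "log_Beta_integral a b m k = integral {0..1} (log_Beta_integrand a b m k)"
    by (simp add: log_Beta_integral_def integral_open_interval_real)
  also have "\<dots> = integral {0..1} (\<lambda>x. log_Beta_integrand a b m k (1 - x))"
    by (rule integral_reflect_unit_interval[symmetric])
  also have "\<dots> = log_Beta_integral b a k m"
    by (simp add: log_Beta_integrand_reflect log_Beta_integral_def integral_open_interval_real)
  finally show ?thesis .
qed

section \<open>Differentiation under the integral sign\<close>

lemma has_field_derivative_quadratic_remainder: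
  fixes f :: "'a::real_normed_field \<Rightarrow> 'a"
  assumes "0 < d"
    and remainder: "\<And>z. norm (z - a) < d \<Longrightarrow> norm (f z - f a - (z - a) * D) \<le> C * norm (z - a) ^ 2"
  shows "(f has_field_derivative D) (at a)"
proof -
  have "((\<lambda>z. (f z - f a) / (z - a) - D) \<longlongrightarrow> 0) (at a)"
  proof (rule Lim_null_comparison)
    show "\<forall>\<^sub>F z in at a. norm ((f z - f a) / (z - a) - D) \<le> C * norm (z - a)"
      unfolding eventually_at ball_UNIV
    proof (intro exI[of _ d] conjI allI impI \<open>0 < d\<close>)
      fix z
      assume "z \<noteq> a \<and> dist z a < d"
      then have z: "z \<noteq> a" "norm (z - a) < d"
        by (auto simp: dist_norm)
      have "norm ((f z - f a) / (z - a) - D) = norm (f z - f a - (z - a) * D) / norm (z - a)"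
        using z by (simp add: norm_divide[symmetric] field_simps)
      also have "\<dots> \<le> C * norm (z - a) ^ 2 / norm (z - a)"
        using remainder[OF z(2)] by (intro divide_right_mono) auto
      also have "\<dots> = C * norm (z - a)"
        using z by (simp add: power2_eq_square)
      finally show "norm ((f z - f a) / (z - a) - D) \<le> C * norm (z - a)" .
    qed
    show "((\<lambda>z. C * norm (z - a)) \<longlongrightarrow> 0) (at a)"
      by (intro tendsto_eq_intros) auto
  qed
  then show ?thesis
    unfolding has_field_derivative_iff by (rule LIM_zero_cancel)
qed

text \<open>
  Here \<open>x^(z-1) = x^(a-1) e^w\<close> with \<open>w = (z-a) ln x\<close>, and \<open>\<bar>e^w - 1 - w\<bar> \<le> e^\<bar>Re w\<bar> \<bar>w\<bar>\<^sup>2\<close>; the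
  factor \<open>e^\<bar>Re w\<bar> \<le> x^(-d)\<close> is absorbed by lowering the exponent \<open>Re a\<close> by \<open>d\<close>.
\<close>
lemma log_Beta_integrand_remainder_le:
  assumes x: "x \<in> {0<..<1}" and z: "norm (z - a) \<le> d"
  shows "norm (log_Beta_integrand z b m k x - log_Beta_integrand a b m k x
                 - (z - a) * log_Beta_integrand a b (Suc m) k x)
         \<le> norm (z - a) ^ 2 * abs_log_Beta_integrand (Re a - d) (Re b) (m + 2) k x"
proof -
  define L where "L = ln x"
  define w where "w = (z - a) * of_real L"
  have L: "L < 0"
    using x by (simp add: L_def)
  have "log_Beta_integrand z b m k x = log_Beta_integrand a b m k x * exp w"
    by (simp add: log_Beta_integrand_def w_def L_def exp_add[symmetric] algebra_simps)
  moreover have "log_Beta_integrand a b (Suc m) k x = log_Beta_integrand a b m k x * of_real L"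
    by (simp add: log_Beta_integrand_def L_def mult_ac)
  ultimately have diff: "log_Beta_integrand z b m k x - log_Beta_integrand a b m k x
      - (z - a) * log_Beta_integrand a b (Suc m) k x = log_Beta_integrand a b m k x * (exp w - (1 + w))"
    by (simp add: w_def algebra_simps)
  have "\<bar>Re w\<bar> \<le> norm w"
    by (rule abs_Re_le_cmod)
  also have "norm w \<le> d * \<bar>L\<bar>"
    using z by (simp add: w_def norm_mult mult_right_mono)
  finally have Re_w: "\<bar>Re w\<bar> \<le> - d * L"
    using L by simp
  have "norm (exp w - (1 + w)) \<le> exp \<bar>Re w\<bar> * norm w ^ 2"
    using Taylor_exp[of w 1] by (simp add: numeral_2_eq_2)
  also have "\<dots> \<le> exp (- d * L) * (norm (z - a) ^ 2 * L ^ 2)"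
    using Re_w by (intro mult_mono) (auto simp: w_def norm_mult power_mult_distrib)
  finally have taylor: "norm (exp w - (1 + w)) \<le> exp (- d * L) * (norm (z - a) ^ 2 * L ^ 2)" .
  have powr_shift: "x powr (Re a - 1) * exp (- d * L) = x powr (Re a - d - 1)"
    using x by (simp add: L_def powr_def exp_add[symmetric] algebra_simps)
  have "norm (log_Beta_integrand a b m k x * (exp w - (1 + w)))
      \<le> abs_log_Beta_integrand (Re a) (Re b) m k x * (exp (- d * L) * (norm (z - a) ^ 2 * L ^ 2))"
    using x taylor
    by (auto simp: norm_mult norm_log_Beta_integrand abs_log_Beta_integrand_def intro!: mult_left_mono)
  also have "\<dots> = norm (z - a) ^ 2 * abs_log_Beta_integrand (Re a - d) (Re b) (m + 2) k x"
    by (simp add: abs_log_Beta_integrand_def L_def powr_shift[symmetric] power_add power2_eq_square mult_ac)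
  finally show ?thesis
    by (simp only: diff)
qed

lemma has_field_derivative_log_Beta_integral_fst:
  assumes a: "0 < Re a" and b: "0 < Re b"
  shows "((\<lambda>z. log_Beta_integral z b m k) has_field_derivative log_Beta_integral a b (Suc m) k) (at a)"
proof (rule has_field_derivative_quadratic_remainder)
  define d where "d = Re a / 2"
  define G where "G = abs_log_Beta_integrand (Re a - d) (Re b) (m + 2) k"
  show "0 < d"
    using a by (simp add: d_def)
  have G: "G integrable_on {0<..<1}"
    unfolding G_def using a b by (intro abs_log_Beta_integrand_integrable) (auto simp: d_def)
  fix z
  assume z: "norm (z - a) < d"
  have "Re a - Re z \<le> norm (z - a)"
    using abs_Re_le_cmod[of "z - a"] by simp
  then have "0 < Re z"
    using a z unfolding d_def by linarith
  then have remainder_integral: "((\<lambda>x. log_Beta_integrand z b m k x - log_Beta_integrand a b m k x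
                   - (z - a) * log_Beta_integrand a b (Suc m) k x) has_integral
          (log_Beta_integral z b m k - log_Beta_integral a b m k
             - (z - a) * log_Beta_integral a b (Suc m) k)) {0<..<1}"
    by (intro has_integral_diff has_integral_mult_right log_Beta_integral_has_integral a b)
  have "norm (integral {0<..<1} (\<lambda>x. log_Beta_integrand z b m k x - log_Beta_integrand a b m k x
                   - (z - a) * log_Beta_integrand a b (Suc m) k x))
      \<le> integral {0<..<1} (\<lambda>x. norm (z - a) ^ 2 * G x)"
  proof (rule integral_norm_bound_integral)
    show "(\<lambda>x. norm (z - a) ^ 2 * G x) integrable_on {0<..<1}"
      using G by (rule integrable_on_mult_right)
    fix x :: real
    assume "x \<in> {0<..<1}"
    then show "norm (log_Beta_integrand z b m k x - log_Beta_integrand a b m k x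
                 - (z - a) * log_Beta_integrand a b (Suc m) k x) \<le> norm (z - a) ^ 2 * G x"
      unfolding G_def using z by (intro log_Beta_integrand_remainder_le) auto
  qed (use remainder_integral in blast)
  then have "norm (log_Beta_integral z b m k - log_Beta_integral a b m k - (z - a) * log_Beta_integral a b (Suc m) k)
      \<le> integral {0<..<1} (\<lambda>x. norm (z - a) ^ 2 * G x)"
    by (simp only: integral_unique[OF remainder_integral])
  also have "\<dots> = integral {0<..<1} G * norm (z - a) ^ 2"
    by (simp add: mult.commute)
  finally show "norm (log_Beta_integral z b m k - log_Beta_integral a b m k
                  - (z - a) * log_Beta_integral a b (Suc m) k) \<le> integral {0<..<1} G * norm (z - a) ^ 2" .
qed

lemma has_field_derivative_log_Beta_integral_snd:
  assumes "0 < Re a" "0 < Re b"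
  shows "((\<lambda>w. log_Beta_integral a w m k) has_field_derivative log_Beta_integral a b m (Suc k)) (at b)"
  using has_field_derivative_log_Beta_integral_fst[OF assms(2,1), of k m]
  by (simp add: log_Beta_integral_commute[of a])

section \<open>Identification with the Beta function\<close>

lemma log_Beta_integral_of_real:
  assumes "0 < s" "0 < t"
  shows "log_Beta_integral (of_real s) (of_real t) 0 0 = Beta (of_real s) (of_real t)"
proof -
  have "((\<lambda>x. x powr (s - 1) * (1 - x) powr (t - 1)) has_integral Beta s t) {0<..<1}"
    using has_integral_Beta_real[OF assms] by (simp add: has_integral_Icc_iff_Ioo)
  then have "((\<lambda>x. complex_of_real (x powr (s - 1) * (1 - x) powr (t - 1)))
               has_integral of_real (Beta s t)) {0<..<1}"
    by (rule has_integral_of_real)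
  then have "(log_Beta_integrand (of_real s) (of_real t) 0 0 has_integral of_real (Beta s t)) {0<..<1}"
    by (rule has_integral_eq[rotated])
       (auto simp: log_Beta_integrand_def powr_def exp_of_real[symmetric] mult_ac)
  then show ?thesis
    by (simp add: log_Beta_integral_def integral_unique Beta_complex_of_real)
qed

lemma islimpt_positive_reals_complex: "(1::complex) islimpt (of_real ` {0<..})"
  unfolding islimpt_approachable
proof (intro allI impI)
  fix e :: real
  assume e: "0 < e"
  have "dist (complex_of_real (1 + e / 2)) 1 = e / 2"
    using e by (simp add: dist_norm)
  then have "complex_of_real (1 + e / 2) \<noteq> 1 \<and> dist (complex_of_real (1 + e / 2)) 1 < e"
    using e by (auto simp del: of_real_add)
  moreover have "complex_of_real (1 + e / 2) \<in> of_real ` {0<..}"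
    using e by (intro imageI) simp
  ultimately show "\<exists>x'\<in>(of_real ` {0<..} :: complex set). x' \<noteq> 1 \<and> dist x' 1 < e"
    by blast
qed

lemma Re_pos_imp_not_nonpos_Ints: "0 < Re z \<Longrightarrow> z \<notin> \<int>\<^sub>\<le>\<^sub>0"
  by (auto elim!: nonpos_Ints_cases)

lemma eq_on_right_half_plane_if_eq_on_positive_reals:
  assumes "f holomorphic_on {z. 0 < Re z}" "g holomorphic_on {z. 0 < Re z}"
    and "\<And>t. 0 < t \<Longrightarrow> f (of_real t) = g (of_real t)" and "0 < Re z"
  shows "f z = g z"
proof -
  have "f z - g z = 0"
  proof (rule analytic_continuation[of "\<lambda>z. f z - g z" _ "of_real ` {0<..}" 1])
    show "(\<lambda>z. f z - g z) holomorphic_on {z. 0 < Re z}"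
      using assms by (intro holomorphic_intros)
    show "open {z. 0 < Re z}"
      by (rule open_halfspace_Re_gt)
    show "connected {z. 0 < Re z}"
      by (rule convex_connected[OF convex_halfspace_Re_gt])
    show "of_real ` {0<..} \<subseteq> {z. 0 < Re z}"
      by auto
    show "(1::complex) islimpt of_real ` {0<..}"
      by (rule islimpt_positive_reals_complex)
  qed (use assms in auto)
  then show ?thesis
    by simp
qed

lemma holomorphic_log_Beta_integral_fst:
  "0 < Re b \<Longrightarrow> (\<lambda>z. log_Beta_integral z b m k) holomorphic_on {z. 0 < Re z}"
  unfolding holomorphic_on_open[OF open_halfspace_Re_gt]
  using has_field_derivative_log_Beta_integral_fst by (blast intro!: exI)

lemma holomorphic_log_Beta_integral_snd:
  "0 < Re a \<Longrightarrow> (\<lambda>w. log_Beta_integral a w m k) holomorphic_on {z. 0 < Re z}"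
  unfolding holomorphic_on_open[OF open_halfspace_Re_gt]
  using has_field_derivative_log_Beta_integral_snd by (blast intro!: exI)

lemma holomorphic_Beta_right_half_plane:
  "0 < Re b \<Longrightarrow> (\<lambda>z. Beta z b) holomorphic_on {z. 0 < Re z}"
  "0 < Re a \<Longrightarrow> (\<lambda>w. Beta a w) holomorphic_on {z. 0 < Re z}"
  by (intro holomorphic_intros; auto simp: Re_pos_imp_not_nonpos_Ints)+

lemma log_Beta_integral_0_0_eq_Beta:
  assumes a: "0 < Re a" and b: "0 < Re b"
  shows "log_Beta_integral a b 0 0 = Beta a b"
proof -
  have real_snd: "log_Beta_integral z (of_real t) 0 0 = Beta z (of_real t)" if z: "0 < Re z" and t: "0 < t" for z t
  proof (rule eq_on_right_half_plane_if_eq_on_positive_reals[OF _ _ _ z])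
    show "(\<lambda>z. log_Beta_integral z (of_real t) 0 0) holomorphic_on {z. 0 < Re z}"
      "(\<lambda>z. Beta z (of_real t)) holomorphic_on {z. 0 < Re z}"
      using t by (simp_all add: holomorphic_log_Beta_integral_fst holomorphic_Beta_right_half_plane)
  qed (use t in \<open>simp add: log_Beta_integral_of_real\<close>)
  show ?thesis
  proof (rule eq_on_right_half_plane_if_eq_on_positive_reals[OF _ _ _ b])
    show "(\<lambda>w. log_Beta_integral a w 0 0) holomorphic_on {z. 0 < Re z}"
      "(\<lambda>w. Beta a w) holomorphic_on {z. 0 < Re z}"
      using a by (simp_all add: holomorphic_log_Beta_integral_snd holomorphic_Beta_right_half_plane)
  qed (use a in \<open>simp add: real_snd\<close>)
qed

lemma log_Beta_integral_1_0_eq_Digamma: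
  assumes a: "0 < Re a" and b: "0 < Re b"
  shows "log_Beta_integral a b 1 0 = Beta a b * (Digamma a - Digamma (a + b))"
proof -
  have "((\<lambda>z. Beta z b) has_field_derivative log_Beta_integral a b (Suc 0) 0) (at a)"
    using a b
    by (intro has_field_derivative_transform_within_open
          [OF has_field_derivative_log_Beta_integral_fst[OF a b] open_halfspace_Re_gt])
       (auto simp: log_Beta_integral_0_0_eq_Beta)
  moreover have "((\<lambda>z. Beta z b) has_field_derivative Beta a b * (Digamma a - Digamma (a + b))) (at a)"
    using a b by (intro has_field_derivative_Beta1 Re_pos_imp_not_nonpos_Ints) auto
  ultimately have "log_Beta_integral a b (Suc 0) 0 = Beta a b * (Digamma a - Digamma (a + b))"
    by (rule DERIV_unique)
  then show ?thesis
    by simp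
qed

section \<open>Chains of derivatives\<close>

definition derivative_chain :: "'a::real_normed_field set \<Rightarrow> (nat \<Rightarrow> 'a \<Rightarrow> 'a) \<Rightarrow> bool" where
  "derivative_chain S F \<longleftrightarrow> (\<forall>n. \<forall>z\<in>S. (F n has_field_derivative F (Suc n) z) (at z))"

lemma derivative_chain_unique:
  assumes "open S" "derivative_chain S F" "derivative_chain S G"
    and "\<And>z. z \<in> S \<Longrightarrow> F 0 z = G 0 z" and "z \<in> S"
  shows "F n z = G n z"
  using \<open>z \<in> S\<close>
proof (induction n arbitrary: z)
  case 0
  then show ?case
    using assms(4) by simp
next
  case (Suc n z)
  have "(F n has_field_derivative F (Suc n) z) (at z)"
    using assms(2) Suc.prems by (auto simp: derivative_chain_def)
  then have "(G n has_field_derivative F (Suc n) z) (at z)"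
    using assms(1) Suc.prems Suc.IH by (rule has_field_derivative_transform_within_open)
  moreover have "(G n has_field_derivative G (Suc n) z) (at z)"
    using assms(3) Suc.prems by (auto simp: derivative_chain_def)
  ultimately show ?case
    by (rule DERIV_unique)
qed

lemma Leibniz_binomial_step:
  fixes F G :: "nat \<Rightarrow> 'a::comm_ring_1"
  shows "(\<Sum>i = 0..n. of_nat (n choose i) * (F (Suc i) * G (n - i) + F i * G (Suc (n - i))))
       = (\<Sum>i = 0..Suc n. of_nat (Suc n choose i) * F i * G (Suc n - i))"
proof -
  have "(\<Sum>i = 0..Suc n. of_nat (Suc n choose i) * F i * G (Suc n - i))
      = F 0 * G (Suc n) + (\<Sum>i = 0..n. of_nat (Suc n choose Suc i) * F (Suc i) * G (n - i))"
    by (subst sum.atLeast0_atMost_Suc_shift) simp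
  also have "(\<Sum>i = 0..n. of_nat (Suc n choose Suc i) * F (Suc i) * G (n - i))
      = (\<Sum>i = 0..n. of_nat (n choose i) * F (Suc i) * G (n - i))
        + (\<Sum>i = 0..n. of_nat (n choose Suc i) * F (Suc i) * G (n - i))"
    by (simp add: sum.distrib algebra_simps)
  also have "(\<Sum>i = 0..n. of_nat (n choose Suc i) * F (Suc i) * G (n - i))
      = (\<Sum>i = 0..n. of_nat (n choose i) * F i * G (Suc (n - i))) - F 0 * G (Suc n)"
  proof -
    have "(\<Sum>i = 0..n. of_nat (n choose i) * F i * G (Suc (n - i)))
        = (\<Sum>i = 0..Suc n. of_nat (n choose i) * F i * G (Suc n - i))"
      by (simp add: Suc_diff_le binomial_eq_0)
    also have "\<dots> = F 0 * G (Suc n) + (\<Sum>i = 0..n. of_nat (n choose Suc i) * F (Suc i) * G (n - i))"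
      by (subst sum.atLeast0_atMost_Suc_shift) simp
    finally show ?thesis
      by simp
  qed
  finally show ?thesis
    by (simp add: sum.distrib algebra_simps)
qed

lemma derivative_chain_Leibniz:
  assumes F: "derivative_chain S F" and G: "derivative_chain S G"
  shows "derivative_chain S (\<lambda>n z. \<Sum>i = 0..n. of_nat (n choose i) * F i z * G (n - i) z)"
  unfolding derivative_chain_def
proof (intro allI ballI)
  fix n z
  assume z: "z \<in> S"
  have "(F i has_field_derivative F (Suc i) z) (at z)" "(G i has_field_derivative G (Suc i) z) (at z)" for i
    using F G z by (auto simp: derivative_chain_def)
  then have "((\<lambda>z. \<Sum>i = 0..n. of_nat (n choose i) * F i z * G (n - i) z) has_field_derivative
        (\<Sum>i = 0..n. of_nat (n choose i) * (F (Suc i) z * G (n - i) z + F i z * G (Suc (n - i)) z))) (at z)"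
    by (intro DERIV_sum) (auto intro!: derivative_eq_intros simp: algebra_simps)
  then show "((\<lambda>z. \<Sum>i = 0..n. of_nat (n choose i) * F i z * G (n - i) z) has_field_derivative
        (\<Sum>i = 0..Suc n. of_nat (Suc n choose i) * F i z * G (Suc n - i) z)) (at z)"
    by (simp only: Leibniz_binomial_step[of n "\<lambda>i. F i z" "\<lambda>i. G i z"])
qed

lemma derivative_chain_sum:
  assumes "\<And>j. j \<in> A \<Longrightarrow> derivative_chain S (F j)"
  shows "derivative_chain S (\<lambda>n z. \<Sum>j\<in>A. c j * F j n z)"
  using assms by (auto simp: derivative_chain_def intro!: DERIV_sum DERIV_cmult)

lemma derivative_chain_shift: "derivative_chain S F \<Longrightarrow> derivative_chain S (\<lambda>n. F (Suc n))"
  by (simp add: derivative_chain_def)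

lemma has_field_derivative_divide_power_Suc:
  fixes z c :: "'a::real_normed_field"
  assumes "z \<noteq> 0"
  shows "((\<lambda>z. c / z ^ Suc n) has_field_derivative - c * of_nat (Suc n) / z ^ Suc (Suc n)) (at z)"
proof -
  have pow: "((\<lambda>z. z ^ Suc n) has_field_derivative of_nat (Suc n) * z ^ n) (at z)"
    using DERIV_power_Suc[OF DERIV_ident, where n = n and x = z and s = UNIV] by (simp add: algebra_simps)
  then have "((\<lambda>z. inverse (z ^ Suc n)) has_field_derivative
               - (of_nat (Suc n) * z ^ n * inverse ((z ^ Suc n) ^ Suc (Suc 0)))) (at z)"
    using assms by (intro DERIV_inverse_fun[where f = "\<lambda>z. z ^ Suc n", OF pow]) simp
  then have "((\<lambda>z. c * inverse (z ^ Suc n)) has_field_derivative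
               c * - (of_nat (Suc n) * z ^ n * inverse ((z ^ Suc n) ^ Suc (Suc 0)))) (at z)"
    by (rule DERIV_cmult)
  moreover have "c * - (of_nat (Suc n) * z ^ n * inverse ((z ^ Suc n) ^ Suc (Suc 0)))
      = - c * of_nat (Suc n) / z ^ Suc (Suc n)"
    using assms by (simp add: field_simps power_mult_distrib power_Suc)
  ultimately have "((\<lambda>z. c * inverse (z ^ Suc n)) has_field_derivative
                     - c * of_nat (Suc n) / z ^ Suc (Suc n)) (at z)"
    by (rule DERIV_cong)
  then show ?thesis
    by (simp only: divide_inverse)
qed

lemma derivative_chain_log_Beta_integral_fst:
  "0 < Re b \<Longrightarrow> derivative_chain {z. 0 < Re z} (\<lambda>m a. log_Beta_integral a b m k)"
  unfolding derivative_chain_def using has_field_derivative_log_Beta_integral_fst by simp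

lemma derivative_chain_log_Beta_integral_snd:
  "0 < Re a \<Longrightarrow> derivative_chain {z. 0 < Re z} (\<lambda>k b. log_Beta_integral a b m k)"
  unfolding derivative_chain_def using has_field_derivative_log_Beta_integral_snd by simp

text \<open>The mixed derivative \<open>\<partial>_a^p \<partial>_b^q (\<psi>(a) - \<psi>(a + b))\<close>.\<close>
definition Digamma_diff_deriv :: "nat \<Rightarrow> nat \<Rightarrow> complex \<Rightarrow> complex \<Rightarrow> complex" where
  "Digamma_diff_deriv p q a b =
     (if q = 0 then Polygamma p a - Polygamma p (a + b) else - Polygamma (p + q) (a + b))"

lemma derivative_chain_Digamma_diff_deriv_fst:
  assumes "0 < Re b"
  shows "derivative_chain {z. 0 < Re z} (\<lambda>p a. Digamma_diff_deriv p q a b)"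
  unfolding derivative_chain_def
proof (intro allI ballI)
  fix p a
  assume "a \<in> {z. 0 < Re z}"
  then have "a \<notin> \<int>\<^sub>\<le>\<^sub>0" "a + b \<notin> \<int>\<^sub>\<le>\<^sub>0"
    using assms by (simp_all add: Re_pos_imp_not_nonpos_Ints)
  then show "((\<lambda>a. Digamma_diff_deriv p q a b) has_field_derivative Digamma_diff_deriv (Suc p) q a b) (at a)"
    unfolding Digamma_diff_deriv_def by (cases "q = 0") (auto intro!: derivative_eq_intros)
qed

lemma derivative_chain_Digamma_diff_deriv_snd:
  assumes "0 < Re a"
  shows "derivative_chain {z. 0 < Re z} (\<lambda>q b. Digamma_diff_deriv p q a b)"
  unfolding derivative_chain_def
proof (intro allI ballI)
  fix q b
  assume "b \<in> {z. 0 < Re z}"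
  then have "a + b \<notin> \<int>\<^sub>\<le>\<^sub>0"
    using assms by (simp add: Re_pos_imp_not_nonpos_Ints)
  then show "((\<lambda>b. Digamma_diff_deriv p q a b) has_field_derivative Digamma_diff_deriv p (Suc q) a b) (at b)"
    unfolding Digamma_diff_deriv_def by (cases "q = 0") (auto intro!: derivative_eq_intros)
qed

lemma log_Beta_integral_1_Leibniz:
  assumes "0 < Re a" "0 < Re b"
  shows "log_Beta_integral a b 1 k
       = (\<Sum>j = 0..k. of_nat (k choose j) * log_Beta_integral a b 0 j * Digamma_diff_deriv 0 (k - j) a b)"
proof -
  have lhs: "derivative_chain {z. 0 < Re z} (\<lambda>k b. log_Beta_integral a b 1 k)"
    using assms(1) by (rule derivative_chain_log_Beta_integral_snd)
  have rhs: "derivative_chain {z. 0 < Re z}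
      (\<lambda>k b. \<Sum>j = 0..k. of_nat (k choose j) * log_Beta_integral a b 0 j * Digamma_diff_deriv 0 (k - j) a b)"
    using assms(1)
    by (intro derivative_chain_Leibniz derivative_chain_log_Beta_integral_snd
              derivative_chain_Digamma_diff_deriv_snd)
  show ?thesis
    by (rule derivative_chain_unique[OF open_halfspace_Re_gt lhs rhs])
       (use assms in \<open>simp_all add: log_Beta_integral_1_0_eq_Digamma[unfolded One_nat_def] log_Beta_integral_0_0_eq_Beta
                                    Digamma_diff_deriv_def\<close>)
qed

lemma log_Beta_integral_Suc_Leibniz:
  assumes "0 < Re a" "0 < Re b"
  shows "log_Beta_integral a b (Suc n) k
       = (\<Sum>j = 0..k. of_nat (k choose j) *
            (\<Sum>i = 0..n. of_nat (n choose i) * log_Beta_integral a b i j * Digamma_diff_deriv (n - i) (k - j) a b))"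
proof -
  have lhs: "derivative_chain {z. 0 < Re z} (\<lambda>n z. log_Beta_integral z b (Suc n) k)"
    using assms(2) by (intro derivative_chain_shift derivative_chain_log_Beta_integral_fst)
  have rhs: "derivative_chain {z. 0 < Re z} (\<lambda>n z. \<Sum>j = 0..k. of_nat (k choose j) *
          (\<Sum>i = 0..n. of_nat (n choose i) * log_Beta_integral z b i j * Digamma_diff_deriv (n - i) (k - j) z b))"
    using assms(2)
    by (intro derivative_chain_sum derivative_chain_Leibniz derivative_chain_log_Beta_integral_fst
              derivative_chain_Digamma_diff_deriv_fst)
  show ?thesis
    by (rule derivative_chain_unique[OF open_halfspace_Re_gt lhs rhs])
       (use assms in \<open>simp_all add: log_Beta_integral_1_Leibniz[unfolded One_nat_def] mult.assoc\<close>)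
qed

lemma Beta_1_right: "0 < Re a \<Longrightarrow> Beta a 1 = 1 / a"
  using Gamma_plus1[of a] by (auto simp: Beta_def Gamma_eq_zero_iff Re_pos_imp_not_nonpos_Ints)

lemma log_Beta_integral_at_one_pure_log:
  assumes "0 < Re a"
  shows "log_Beta_integral a 1 n 0 = (-1) ^ n * fact n / a ^ Suc n"
proof -
  have lhs: "derivative_chain {z. 0 < Re z} (\<lambda>n z. log_Beta_integral z 1 n 0)"
    by (rule derivative_chain_log_Beta_integral_fst) simp
  have rhs: "derivative_chain {z. 0 < Re z} (\<lambda>n z. (-1) ^ n * fact n / z ^ Suc n)"
    unfolding derivative_chain_def
  proof (intro allI ballI)
    fix n and z :: complex
    assume "z \<in> {z. 0 < Re z}"
    then have "z \<noteq> 0"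
      by auto
    then show "((\<lambda>z. (-1) ^ n * fact n / z ^ Suc n) has_field_derivative
                 (-1) ^ Suc n * fact (Suc n) / z ^ Suc (Suc n)) (at z)"
      by (rule DERIV_cong[OF has_field_derivative_divide_power_Suc]) (simp_all add: algebra_simps)
  qed
  show ?thesis
  proof (rule derivative_chain_unique[OF open_halfspace_Re_gt lhs rhs])
    show "log_Beta_integral z 1 0 0 = (-1) ^ 0 * fact 0 / z ^ Suc 0" if "z \<in> {z. 0 < Re z}" for z
      using that by (simp add: log_Beta_integral_0_0_eq_Beta Beta_1_right)
  qed (use assms in simp)
qed

lemma Polygamma_plus1_shifted_harmonic:
  fixes \<alpha> :: complex
  assumes "\<alpha> + 1 \<noteq> 0" "2 \<le> s"
  shows "- Polygamma (s - 1) (\<alpha> + 1) = (-1) ^ s * fact (s - 1) * (shifted_harmonic \<alpha> s - zeta_int s)"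
proof -
  define tail where "tail z = (\<Sum>k. inverse ((z + of_nat k) ^ s))" for z :: complex
  have shifted: "(\<lambda>n. 1 / (of_nat (Suc n) + \<alpha>) ^ s) sums tail (\<alpha> + 1)"
    using summable_sums[OF Polygamma_converges'[OF assms]]
    by (simp add: tail_def divide_inverse add_ac)
  have unshifted: "(\<lambda>n. 1 / of_nat (Suc n) ^ s) sums tail 1"
    using summable_sums[OF Polygamma_converges'[OF _ assms(2), of 1]]
    by (simp add: tail_def divide_inverse add_ac)
  have "shifted_harmonic \<alpha> s = tail 1 - tail (\<alpha> + 1)"
    unfolding shifted_harmonic_def using sums_unique[OF sums_diff[OF unshifted shifted]] by simp
  moreover have "zeta_int s = tail 1"
    unfolding zeta_int_def using sums_unique[OF unshifted] by simp
  moreover have "Polygamma (s - 1) (\<alpha> + 1) = (-1) ^ s * fact (s - 1) * tail (\<alpha> + 1)"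
    using assms(2) by (simp add: Polygamma_def tail_def Suc_diff_le)
  ultimately show ?thesis
    by simp
qed

lemma Digamma_diff_deriv_one_zero:
  assumes "\<alpha> \<noteq> 0"
  shows "Digamma_diff_deriv p 0 \<alpha> 1 = (-1) ^ Suc p * fact p / \<alpha> ^ Suc p"
  using Polygamma_plus1[OF assms, of p] by (simp add: Digamma_diff_deriv_def)

lemma Digamma_diff_deriv_one:
  assumes "\<alpha> + 1 \<noteq> 0" "0 < q"
  shows "Digamma_diff_deriv p q \<alpha> 1
       = (-1) ^ Suc (p + q) * fact (p + q) * (shifted_harmonic \<alpha> (Suc (p + q)) - zeta_int (Suc (p + q)))"
  using Polygamma_plus1_shifted_harmonic[OF assms(1), of "Suc (p + q)"] assms(2)
  by (simp add: Digamma_diff_deriv_def)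

lemma log_Beta_integral_at_one_recurrence:
  assumes "0 < Re \<alpha>"
  shows "log_Beta_integral \<alpha> 1 (Suc n) k =
      (\<Sum>i<Suc n. of_nat (n choose i) * of_nat (fact (n - i))
               * (-1) ^ (Suc n - i) / \<alpha> ^ (Suc n - i) * log_Beta_integral \<alpha> 1 i k)
    + (\<Sum>i<Suc n. \<Sum>j<k. of_nat (n choose i) * of_nat (k choose j)
               * (-1) ^ (Suc n + k - i - j) * of_nat (fact (n + k - i - j))
               * (shifted_harmonic \<alpha> (Suc n + k - i - j) - zeta_int (Suc n + k - i - j))
               * log_Beta_integral \<alpha> 1 i j)"
proof -
  have \<alpha>: "\<alpha> \<noteq> 0" "\<alpha> + 1 \<noteq> 0"
    using assms by (auto simp: complex_eq_iff)
  define X where "X j = of_nat (k choose j) * (\<Sum>i<Suc n. of_nat (n choose i)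
                          * log_Beta_integral \<alpha> 1 i j * Digamma_diff_deriv (n - i) (k - j) \<alpha> 1)" for j
  have rational_term: "of_nat (n choose i) * log_Beta_integral \<alpha> 1 i k * Digamma_diff_deriv (n - i) 0 \<alpha> 1
      = of_nat (n choose i) * of_nat (fact (n - i)) * (-1) ^ (Suc n - i) / \<alpha> ^ (Suc n - i) * log_Beta_integral \<alpha> 1 i k"
    if "i < Suc n" for i
    using that by (simp add: Digamma_diff_deriv_one_zero[OF \<alpha>(1)] Suc_diff_le)
  have zeta_term: "of_nat (k choose j) * (of_nat (n choose i) * log_Beta_integral \<alpha> 1 i j * Digamma_diff_deriv (n - i) (k - j) \<alpha> 1)
      = of_nat (n choose i) * of_nat (k choose j) * (-1) ^ (Suc n + k - i - j) * of_nat (fact (n + k - i - j))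
        * (shifted_harmonic \<alpha> (Suc n + k - i - j) - zeta_int (Suc n + k - i - j)) * log_Beta_integral \<alpha> 1 i j"
    if "i < Suc n" "j < k" for i j
  proof -
    have q: "0 < k - j"
      using that by simp
    have s: "n - i + (k - j) = n + k - i - j" "Suc (n + k - i - j) = Suc n + k - i - j"
      using that by auto
    have "Digamma_diff_deriv (n - i) (k - j) \<alpha> 1 = (-1) ^ (Suc n + k - i - j) * fact (n + k - i - j)
        * (shifted_harmonic \<alpha> (Suc n + k - i - j) - zeta_int (Suc n + k - i - j))"
      using Digamma_diff_deriv_one[OF \<alpha>(2) q, of "n - i"] by (simp only: s)
    then show ?thesis
      by (simp only: of_nat_fact ac_simps)
  qed
  have "log_Beta_integral \<alpha> 1 (Suc n) k = (\<Sum>j<Suc k. X j)"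
    using log_Beta_integral_Suc_Leibniz[OF assms, of 1 n k]
    by (simp add: X_def atLeast0AtMost lessThan_Suc_atMost)
  also have "\<dots> = X k + (\<Sum>j<k. X j)"
    by simp
  also have "X k = (\<Sum>i<Suc n. of_nat (n choose i) * of_nat (fact (n - i))
               * (-1) ^ (Suc n - i) / \<alpha> ^ (Suc n - i) * log_Beta_integral \<alpha> 1 i k)"
    unfolding X_def by (simp add: rational_term)
  also have "(\<Sum>j<k. X j) = (\<Sum>i<Suc n. \<Sum>j<k. of_nat (k choose j) * (of_nat (n choose i)
                          * log_Beta_integral \<alpha> 1 i j * Digamma_diff_deriv (n - i) (k - j) \<alpha> 1))"
    unfolding X_def sum_distrib_left by (rule sum.swap)
  also have "\<dots> = (\<Sum>i<Suc n. \<Sum>j<k. of_nat (n choose i) * of_nat (k choose j)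
               * (-1) ^ (Suc n + k - i - j) * of_nat (fact (n + k - i - j))
               * (shifted_harmonic \<alpha> (Suc n + k - i - j) - zeta_int (Suc n + k - i - j))
               * log_Beta_integral \<alpha> 1 i j)"
    by (intro sum.cong refl zeta_term) auto
  finally show ?thesis .
qed

theorem theorem2p1:
  fixes \<alpha> :: complex and m k :: nat
  assumes "Re \<alpha> > 0" and "m \<ge> 1" and "k \<ge> 1"
  shows "Iint \<alpha> m k =
      (\<Sum>i<m. of_nat ((m - 1) choose i) * of_nat (fact (m - i - 1))
               * (-1) ^ (m - i) / \<alpha> ^ (m - i) * Iint \<alpha> i k)
    + (\<Sum>i<m. \<Sum>j<k. of_nat ((m - 1) choose i) * of_nat (k choose j)
               * (-1) ^ (m + k - i - j) * of_nat (fact (m + k - i - j - 1))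
               * (shifted_harmonic \<alpha> (m + k - i - j) - zeta_int (m + k - i - j))
               * Iint \<alpha> i j)
    \<and> Iint \<alpha> 0 0 = 1 / \<alpha>
    \<and> (\<forall>i. Iint \<alpha> i 0 = (-1) ^ i * of_nat (fact i) / \<alpha> ^ (i + 1))"
proof -
  obtain n where m: "m = Suc n"
    using assms(2) by (cases m) auto
  show ?thesis
    using log_Beta_integral_at_one_recurrence[OF assms(1), of n k]
    by (simp add: m Iint_eq_log_Beta_integral log_Beta_integral_at_one_pure_log[OF assms(1)])
qed

end
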